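(* Let $T$ be a standard Young tableau with distinct positive integer entries, and let $s$ be an entry of $T$. Let $r<s$ be an integer such that no entry of $T$ lies in the open interval $(r,s)$, and let $k$ be a positive integer with $k\leq s-r$. Choose $k-1$ integers $r<r_1<\cdots<r_{k-1}<s$, and let $T'$ be the tableau obtained from $T$ by column inserting $r_{k-1},r_{k-2},\dots,r_1$ in that order. Then: (1) $c_{T'}(r_i)=i$ for $1\le i\le k-1$, and $c_{T'}(s)=m$, where $m=\max\{c_T(s),k\}$; (2) if $s'$ is an entry of $T$ with $s'>s$, then either $c_{T'}(s')=c_T(s')$ or $c_{T'}(s')\leq m+n$, where $m$ is as in (1) and $n$ is the number of entries of $T$ lying in the half-open interval $[s,s')$.
   Context: For a tableau $T$ and an entry $a$ of $T$, $c_T(a)$ denotes the index of the column of $T$ containing $a$ (columns numbered from $1$ starting on the left). Column insertion of a number $a$ into a tableau: place $a$ in the first column, bumping the smallest entry of that column larger than $a$ (if any); the bumped entry is then inserted into the second column in the same way, and so on, until an entry is placed at the bottom of a column without bumping. *)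

theory Defs
  imports Main
begin

text \<open>A tableau is represented as the list of its columns (left to right);
each column is listed top to bottom. Entries are integers.\<close>

type_synonym tableau = "int list list"

definition entries :: "tableau \<Rightarrow> int set" where
  "entries T = (\<Union>c\<in>set T. set c)"

definition standard :: "tableau \<Rightarrow> bool" where
  "standard T \<longleftrightarrow>
     (\<forall>j < length T. T ! j \<noteq> []) \<and>
     (\<forall>j. Suc j < length T \<longrightarrow> length (T ! Suc j) \<le> length (T ! j)) \<and>
     (\<forall>j < length T. sorted_wrt (<) (T ! j)) \<and>
     (\<forall>j i. Suc j < length T \<longrightarrow> i < length (T ! Suc j) \<longrightarrow> T ! j ! i < T ! Suc j ! i) \<and>
     distinct (concat T)"

definition col :: "tableau \<Rightarrow> int \<Rightarrow> nat" where
  "col T a = Suc (LEAST j. j < length T \<and> a \<in> set (T ! j))"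

fun col_insert :: "int \<Rightarrow> tableau \<Rightarrow> tableau" where
  "col_insert a [] = [[a]]"
| "col_insert a (c # cs) =
     (if \<exists>x\<in>set c. a < x
      then (let i = (LEAST i. i < length c \<and> a < c ! i)
            in c[i := a] # col_insert (c ! i) cs)
      else (c @ [a]) # cs)"

end

theory Submission
  imports Defs
begin

text \<open>As long as the columns are strictly increasing, column insertion only depends on the sets
of entries of the columns, and the entry bumped out of a column C by x is the least element of C
above x; the argument is carried out in this model.

Inserting r_(k-1), ..., r_1 in this order keeps the invariant that r_i is the only entry of column i
in the open interval (r, s) and that no other column meets this interval: a new r_0 below all of
them bumps r_1 out of column 1, r_1 bumps r_2 out of column 2, and so on, and the last of them
bumps an entry \<ge> s, which from then on only bumps entries larger than s. So s moves, by one
column, exactly when it sits in the column just right of the r_i.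

For (2): an entry y moved by inserting x is reached through a chain x < b_1 < ... < y of bumped
entries, one per column, so it lands in a column at most one more than the number of entries in
[x, y); these are inserted r_i or entries of T in [s, y).\<close>

section \<open>Column insertion and column indices\<close>

lemma entries_Nil [simp]: "entries [] = {}"
  by (simp add: entries_def)

lemma entries_Cons [simp]: "entries (c # cs) = set c \<union> entries cs"
  by (simp add: entries_def)

lemma finite_entries [simp]: "finite (entries T)"
  by (simp add: entries_def)

lemma col_insert_Cons_bumpE:
  assumes "\<exists>z\<in>set c. x < z"
  obtains i where "i < length c" "x < c ! i" "\<forall>j<i. \<not> x < c ! j"
    "col_insert x (c # cs) = c[i := x] # col_insert (c ! i) cs"
proof -
  define i where "i = (LEAST i. i < length c \<and> x < c ! i)"
  have "\<exists>i. i < length c \<and> x < c ! i"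
    using assms by (auto simp: in_set_conv_nth)
  then have i: "i < length c" "x < c ! i"
    unfolding i_def by (metis (mono_tags, lifting) LeastI_ex)+
  moreover have "\<forall>j<i. \<not> x < c ! j"
    using i not_less_Least unfolding i_def by fastforce
  moreover have "col_insert x (c # cs) = c[i := x] # col_insert (c ! i) cs"
    using assms by (simp add: i_def Let_def)
  ultimately show thesis
    using that by blast
qed

lemma entries_col_insert: "entries (col_insert x T) = insert x (entries T)"
proof (induction T arbitrary: x)
  case (Cons c cs)
  show ?case
  proof (cases "\<exists>z\<in>set c. x < z")
    case True
    then obtain i where i: "i < length c"
      and eq: "col_insert x (c # cs) = c[i := x] # col_insert (c ! i) cs"
      by (rule col_insert_Cons_bumpE)
    have "insert (c ! i) (set (c[i := x])) = insert x (set c)"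
      using i by (auto simp: set_update_memI dest: set_update_subset_insert[THEN subsetD])
        (metis in_set_conv_nth length_list_update nth_list_update_neq)
    then show ?thesis
      using eq Cons.IH by auto
  qed simp
qed simp

lemma entries_fold_col_insert: "entries (fold col_insert xs T) = set xs \<union> entries T"
  by (induction xs arbitrary: T) (auto simp: entries_col_insert)

lemma in_set_update_other:
  assumes "y \<noteq> x" "y \<noteq> xs ! i"
  shows "y \<in> set (xs[i := x]) \<longleftrightarrow> y \<in> set xs"
proof
  show "y \<in> set (xs[i := x]) \<Longrightarrow> y \<in> set xs"
    using set_update_subset_insert assms(1) by fastforce
next
  assume "y \<in> set xs"
  then obtain j where "j < length xs" "xs ! j = y"
    by (auto simp: in_set_conv_nth)
  moreover have "j \<noteq> i"
    using assms(2) calculation(2) by blast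
  ultimately show "y \<in> set (xs[i := x])"
    by (metis length_list_update nth_list_update_neq nth_mem)
qed

lemma col_Cons_in: "y \<in> set c \<Longrightarrow> col (c # cs) y = 1"
  unfolding col_def by (simp add: Least_equality)

lemma col_Cons_notin:
  assumes "y \<notin> set c" "y \<in> entries cs"
  shows "col (c # cs) y = Suc (col cs y)"
proof -
  obtain j where "j < length cs" "y \<in> set (cs ! j)"
    using assms(2) unfolding entries_def by (metis UN_E in_set_conv_nth)
  then show ?thesis
    using assms(1) Least_Suc[where n = "Suc j" and P = "\<lambda>j. j < length (c # cs) \<and> y \<in> set ((c # cs) ! j)"]
    by (simp add: col_def)
qed

lemma col_cong:
  "(\<And>j. j < length A \<and> y \<in> set (A ! j) \<longleftrightarrow> j < length B \<and> y \<in> set (B ! j))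
    \<Longrightarrow> col A y = col B y"
  by (simp add: col_def)

text \<open>Outside the entries, col is the junk value Suc (LEAST j. False), the same for every tableau.\<close>

lemma col_notin_entries: "y \<notin> entries A \<Longrightarrow> y \<notin> entries B \<Longrightarrow> col A y = col B y"
  by (rule col_cong) (auto simp: entries_def)

lemma col_append_column: "y \<noteq> x \<Longrightarrow> col ((c @ [x]) # cs) y = col (c # cs) y"
  by (rule col_cong) (auto simp: nth_Cons split: nat.split)

lemma col_col_insert_self: "col (col_insert x T) x = 1"
proof (cases T)
  case (Cons c cs)
  then show ?thesis
  proof (cases "\<exists>z\<in>set c. x < z")
    case True
    then obtain i where "i < length c" "col_insert x (c # cs) = c[i := x] # col_insert (c ! i) cs"
      by (rule col_insert_Cons_bumpE)
    then show ?thesis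
      using Cons by (simp add: col_Cons_in set_update_memI)
  qed (simp add: col_Cons_in)
qed (simp add: col_Cons_in)

lemma col_col_insert_less: "y < x \<Longrightarrow> col (col_insert x T) y = col T y"
proof (induction T arbitrary: x)
  case Nil
  then show ?case
    by (intro col_notin_entries) auto
next
  case (Cons c cs)
  show ?case
  proof (cases "\<exists>z\<in>set c. x < z")
    case True
    then obtain i where i: "i < length c" "x < c ! i"
      and eq: "col_insert x (c # cs) = c[i := x] # col_insert (c ! i) cs"
      by (rule col_insert_Cons_bumpE)
    have "y \<in> set (c[i := x]) \<longleftrightarrow> y \<in> set c"
      using i Cons.prems by (intro in_set_update_other) auto
    moreover have "y \<in> entries (col_insert (c ! i) cs) \<longleftrightarrow> y \<in> entries cs"
      using i Cons.prems by (auto simp: entries_col_insert)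
    moreover have "col (col_insert (c ! i) cs) y = col cs y"
      using Cons i by auto
    ultimately show ?thesis
      unfolding eq by (metis col_Cons_in col_Cons_notin col_notin_entries entries_Cons Un_iff)
  next
    case False
    then show ?thesis
      using Cons.prems by (simp add: col_append_column)
  qed
qed

lemma col_col_insert_changed_le:
  assumes "col (col_insert x T) y \<noteq> col T y"
  shows "col (col_insert x T) y \<le> Suc (card {z \<in> insert x (entries T). x \<le> z \<and> z < y})"
  using assms
proof (induction T arbitrary: x)
  case Nil
  then have "y = x"
    using col_notin_entries[of y "[[x]]" "[]"] by fastforce
  then show ?case
    by (simp add: col_Cons_in)
next
  case (Cons c cs)
  show ?case
  proof (cases "\<exists>z\<in>set c. x < z")
    case False
    then have "col_insert x (c # cs) = (c @ [x]) # cs"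
      by simp
    then have "y = x"
      using Cons.prems by (metis col_append_column)
    then show ?thesis
      by (metis col_col_insert_self le_add1 plus_1_eq_Suc)
  next
    case True
    then obtain i where i: "i < length c" "x < c ! i"
      and eq: "col_insert x (c # cs) = c[i := x] # col_insert (c ! i) cs"
      by (rule col_insert_Cons_bumpE)
    let ?b = "c ! i"
    let ?B = "{z \<in> insert x (entries (c # cs)). x \<le> z \<and> z < y}"
    let ?A = "{z \<in> insert ?b (entries cs). ?b \<le> z \<and> z < y}"
    consider "y \<in> set (c[i := x])"
      | "y = ?b" "y \<notin> set (c[i := x])"
      | "y \<notin> set c" "y \<notin> set (c[i := x])" "y \<in> entries cs"
      | "y \<notin> set c" "y \<notin> set (c[i := x])" "y \<notin> entries cs"
      using in_set_update_other[of y x c i] set_update_memI[OF i(1), of x] by blast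
    then show ?thesis
    proof cases
      case 1
      then show ?thesis
        unfolding eq by (simp add: col_Cons_in)
    next
      case 2
      then have "col (col_insert x (c # cs)) y = 2"
        unfolding eq by (simp add: col_Cons_notin entries_col_insert col_col_insert_self)
      moreover have "?B \<noteq> {}"
        using 2 i by auto
      then have "1 \<le> card ?B"
        by (simp add: Suc_leI card_gt_0_iff)
      ultimately show ?thesis
        by simp
    next
      case 3
      have new: "col (col_insert x (c # cs)) y = Suc (col (col_insert ?b cs) y)"
        using 3 unfolding eq by (simp add: col_Cons_notin entries_col_insert)
      moreover have "col (c # cs) y = Suc (col cs y)"
        using 3 by (simp add: col_Cons_notin)
      ultimately have moved: "col (col_insert ?b cs) y \<noteq> col cs y"
        using Cons.prems by simp
      then have "?b \<le> y"
        using col_col_insert_less by (metis not_le)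
      then have "insert x ?A \<subseteq> ?B" "x \<notin> ?A"
        using 3 i by auto
      moreover have "finite ?A"
        by simp
      ultimately have "Suc (card ?A) \<le> card ?B"
        using card_mono[of ?B "insert x ?A"] by simp
      then show ?thesis
        using Cons.IH[OF moved] new by simp
    next
      case 4
      then have "y \<notin> entries (col_insert x (c # cs))"
        using i unfolding eq by (auto simp: entries_col_insert)
      then show ?thesis
        using 4 Cons.prems by (metis col_notin_entries entries_Cons Un_iff)
    qed
  qed
qed

lemma col_fold_col_insert_changed_le:
  assumes gap: "\<forall>z\<in>entries T. z \<le> r \<or> s \<le> z" and above: "\<forall>x\<in>set xs. r < x"
  shows "col (fold col_insert (rev xs) T) y = col T y
    \<or> col (fold col_insert (rev xs) T) y \<le> Suc (length xs + card {z \<in> entries T. s \<le> z \<and> z < y})"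
  using above
proof (induction xs)
  case (Cons x xs)
  define T1 where "T1 = fold col_insert (rev xs) T"
  let ?N = "{z \<in> entries T. s \<le> z \<and> z < y}"
  let ?n = "card ?N"
  have "fold col_insert (rev (x # xs)) T = col_insert x T1"
    by (simp add: T1_def)
  moreover have "col (col_insert x T1) y \<le> Suc (length (x # xs) + ?n)"
    if moved: "col (col_insert x T1) y \<noteq> col T1 y"
  proof -
    have "entries T1 = set xs \<union> entries T"
      by (simp add: T1_def entries_fold_col_insert)
    then have "{z \<in> insert x (entries T1). x \<le> z \<and> z < y} \<subseteq> set (x # xs) \<union> ?N"
      using gap Cons.prems by fastforce
    then have "card {z \<in> insert x (entries T1). x \<le> z \<and> z < y} \<le> card (set (x # xs) \<union> ?N)"
      by (intro card_mono) simp_all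
    also have "\<dots> \<le> card (set (x # xs)) + ?n"
      by (rule card_Un_le)
    also have "\<dots> \<le> length (x # xs) + ?n"
      using card_length by (rule add_right_mono)
    finally show ?thesis
      using col_col_insert_changed_le[OF moved] by simp
  qed
  moreover have "col T1 y = col T y \<or> col T1 y \<le> Suc (length xs + ?n)"
    using Cons by (simp add: T1_def)
  ultimately show ?case
    by fastforce
qed simp

section \<open>Column insertion on sets of entries\<close>

definition bumped :: "'a::linorder \<Rightarrow> 'a set \<Rightarrow> 'a" where
  "bumped x C = Min {z \<in> C. x < z}"

lemma
  assumes "finite C" "\<exists>z\<in>C. x < z"
  shows bumped_in: "bumped x C \<in> C" and less_bumped: "x < bumped x C"
proof -
  have "Min {z \<in> C. x < z} \<in> {z \<in> C. x < z}"
    using assms by (intro Min_in) auto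
  then show "bumped x C \<in> C" "x < bumped x C"
    by (simp_all add: bumped_def)
qed

lemma bumped_le: "finite C \<Longrightarrow> z \<in> C \<Longrightarrow> x < z \<Longrightarrow> bumped x C \<le> z"
  by (simp add: bumped_def)

lemma bumped_eqI:
  "finite C \<Longrightarrow> b \<in> C \<Longrightarrow> x < b \<Longrightarrow> (\<And>z. z \<in> C \<Longrightarrow> x < z \<Longrightarrow> b \<le> z)
    \<Longrightarrow> bumped x C = b"
  by (meson antisym bumped_in bumped_le less_bumped)

lemma bumped_eq_gap_entry:
  assumes "finite C" "y \<in> C" "r < x" "x < y" "y < s" "\<forall>z\<in>C. z \<le> r \<or> s \<le> z \<or> z = y"
  shows "bumped x C = y"
proof -
  have "\<exists>z\<in>C. x < z"
    using assms(2,4) by blast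
  then have "bumped x C \<in> C" "r < bumped x C"
    using assms(1,3) bumped_in less_bumped by (blast, fastforce)
  moreover have "bumped x C \<le> y"
    using assms(1,2,4) by (rule bumped_le)
  ultimately show ?thesis
    using assms(5,6) by fastforce
qed

lemma gap_le_bumped:
  assumes "finite C" "\<exists>z\<in>C. x < z" "r < x" "\<forall>z\<in>C. z \<le> r \<or> s \<le> z"
  shows "s \<le> bumped x C"
proof -
  have "bumped x C \<in> C" "x < bumped x C"
    using assms(1,2) by (rule bumped_in, rule less_bumped)
  then show ?thesis
    using assms(3,4) by fastforce
qed

fun col_insert_set :: "'a::linorder \<Rightarrow> 'a set list \<Rightarrow> 'a set list" where
  "col_insert_set x [] = [{x}]"
| "col_insert_set x (C # Cs) =
     (if \<exists>z\<in>C. x < z then insert x (C - {bumped x C}) # col_insert_set (bumped x C) Cs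
      else insert x C # Cs)"

lemma Union_col_insert_set:
  "\<forall>C\<in>set Cs. finite C \<Longrightarrow> \<Union>(set (col_insert_set x Cs)) = insert x (\<Union>(set Cs))"
  by (induction Cs arbitrary: x) (auto dest: bumped_in)

lemma finite_col_insert_set:
  "\<forall>C\<in>set Cs. finite C \<Longrightarrow> \<forall>D\<in>set (col_insert_set x Cs). finite D"
  by (induction Cs arbitrary: x) auto

definition in_column :: "'a set list \<Rightarrow> nat \<Rightarrow> 'a \<Rightarrow> bool" where
  "in_column Cs p y \<longleftrightarrow> p < length Cs \<and> y \<in> Cs ! p \<and> (\<forall>i<p. y \<notin> Cs ! i)"

lemma in_column_Nil [simp]: "\<not> in_column [] p y"
  by (simp add: in_column_def)

lemma in_column_Cons_0 [simp]: "in_column (C # Cs) 0 y \<longleftrightarrow> y \<in> C"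
  by (simp add: in_column_def)

lemma in_column_Cons_Suc [simp]: "in_column (C # Cs) (Suc p) y \<longleftrightarrow> y \<notin> C \<and> in_column Cs p y"
  unfolding in_column_def by (simp only: All_less_Suc2 length_Cons) auto

lemma in_column_col_insert_set_less:
  "\<forall>C\<in>set Cs. finite C \<Longrightarrow> y < x \<Longrightarrow> in_column Cs p y
    \<Longrightarrow> in_column (col_insert_set x Cs) p y"
proof (induction Cs arbitrary: x p)
  case (Cons C Cs)
  show ?case
  proof (cases "\<exists>z\<in>C. x < z")
    case True
    then have "y < bumped x C"
      using Cons.prems less_bumped[of C x] by auto
    then show ?thesis
      using True Cons by (cases p) auto
  qed (use Cons.prems in \<open>cases p; auto\<close>)
qed simp

fun gap_diagonal :: "'a::linorder \<Rightarrow> 'a \<Rightarrow> 'a list \<Rightarrow> 'a set list \<Rightarrow> bool" where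
  "gap_diagonal r s [] Cs \<longleftrightarrow> (\<forall>z\<in>\<Union>(set Cs). z \<le> r \<or> s \<le> z)"
| "gap_diagonal r s (y # ys) [] \<longleftrightarrow> False"
| "gap_diagonal r s (y # ys) (C # Cs) \<longleftrightarrow>
     y \<in> C \<and> (\<forall>z\<in>C. z \<le> r \<or> s \<le> z \<or> z = y) \<and> gap_diagonal r s ys Cs"

lemma in_column_gap_diagonal:
  assumes "gap_diagonal r s ys Cs" "distinct ys" "\<forall>y\<in>set ys. r < y \<and> y < s" "i < length ys"
  shows "in_column Cs i (ys ! i)"
  using assms
proof (induction ys arbitrary: Cs i)
  case (Cons y ys)
  then obtain C Cs' where "Cs = C # Cs'"
    by (cases Cs) auto
  show ?case
  proof (cases i)
    case (Suc j)
    have "ys ! j \<in> set ys"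
      using Cons.prems(4) Suc by simp
    then have "ys ! j \<notin> C"
      using Cons.prems \<open>Cs = C # Cs'\<close> by force
    then show ?thesis
      using Cons \<open>Cs = C # Cs'\<close> Suc by auto
  qed (use Cons \<open>Cs = C # Cs'\<close> in auto)
qed simp

lemma gap_diagonal_col_insert_set:
  assumes "\<forall>C\<in>set Cs. finite C" "r < x" "x < s" "sorted_wrt (<) (x # ys)" "\<forall>y\<in>set ys. y < s"
    and "gap_diagonal r s ys Cs"
  shows "gap_diagonal r s (x # ys) (col_insert_set x Cs)"
  using assms
proof (induction ys arbitrary: x Cs)
  case Nil
  show ?case
  proof (cases Cs)
    case (Cons C Cs')
    show ?thesis
    proof (cases "\<exists>z\<in>C. x < z")
      case True
      then have "s \<le> bumped x C"
        using Nil Cons by (intro gap_le_bumped) auto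
      moreover have "\<Union>(set (col_insert_set (bumped x C) Cs')) = insert (bumped x C) (\<Union>(set Cs'))"
        using Nil Cons by (intro Union_col_insert_set) auto
      ultimately show ?thesis
        using Nil Cons True by auto
    qed (use Nil Cons in auto)
  qed simp
next
  case (Cons y ys)
  then obtain C Cs' where Cs: "Cs = C # Cs'"
    by (cases Cs) auto
  with Cons.prems have "bumped x C = y"
    by (intro bumped_eq_gap_entry[where r = r and s = s]) auto
  with Cons Cs show ?case
    by auto
qed

lemma in_column_col_insert_set_self: "in_column (col_insert_set x Cs) 0 x"
  by (cases Cs) auto

lemma in_column_col_insert_set_gap:
  assumes "\<forall>C\<in>set Cs. finite C" "r < x" "x < s" "sorted_wrt (<) (x # ys)" "\<forall>y\<in>set ys. y < s"
    and "gap_diagonal r s ys Cs" "in_column Cs p s" "length ys \<le> p"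
  shows "in_column (col_insert_set x Cs) (max p (Suc (length ys))) s"
  using assms
proof (induction ys arbitrary: x Cs p)
  case Nil
  then obtain C Cs' where Cs: "Cs = C # Cs'"
    by (cases Cs) auto
  have gap: "\<forall>z\<in>C. z \<le> r \<or> s \<le> z"
    using Nil.prems(6) Cs by simp
  show ?case
  proof (cases p)
    case 0
    then have "s \<in> C"
      using Nil.prems(7) Cs by simp
    moreover have "s \<le> z" if "z \<in> C" "x < z" for z
      using gap that Nil.prems(2) by force
    then have "bumped x C = s"
      using Nil.prems(1,3) Cs \<open>s \<in> C\<close> by (intro bumped_eqI) auto
    ultimately show ?thesis
      using Nil.prems(3) Cs 0 in_column_col_insert_set_self[of s Cs'] by auto
  next
    case (Suc q)
    then have "s \<notin> C" "in_column Cs' q s"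
      using Nil.prems(7) Cs by auto
    show ?thesis
    proof (cases "\<exists>z\<in>C. x < z")
      case True
      then have "s \<le> bumped x C" "bumped x C \<in> C"
        using Nil.prems Cs gap by (auto intro: gap_le_bumped bumped_in)
      then have "s < bumped x C"
        using \<open>s \<notin> C\<close> by (metis order.not_eq_order_implies_strict)
      then have "in_column (col_insert_set (bumped x C) Cs') q s"
        using Nil.prems(1) Cs \<open>in_column Cs' q s\<close> by (intro in_column_col_insert_set_less) auto
      then show ?thesis
        using True Cs Suc \<open>s \<notin> C\<close> Nil.prems(3) by simp
    qed (use Cs Suc \<open>s \<notin> C\<close> \<open>in_column Cs' q s\<close> Nil.prems(3) in auto)
  qed
next
  case (Cons y ys)
  then obtain C Cs' where Cs: "Cs = C # Cs'"
    by (cases Cs) auto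
  obtain q where q: "p = Suc q"
    using Cons.prems(8) by (cases p) auto
  have "y \<in> C" "x < y"
    using Cons.prems(4,6) Cs by auto
  moreover have "bumped x C = y"
    using Cons.prems Cs by (intro bumped_eq_gap_entry[where r = r and s = s]) auto
  ultimately have eq: "col_insert_set x Cs = insert x (C - {y}) # col_insert_set y Cs'"
    using Cs by auto
  have "s \<notin> C" "in_column Cs' q s"
    using Cons.prems(7) Cs q by auto
  moreover have "in_column (col_insert_set y Cs') (max q (Suc (length ys))) s"
    using Cons.prems Cs q \<open>in_column Cs' q s\<close> by (intro Cons.IH) auto
  ultimately show ?case
    using Cons.prems(3) q by (simp add: eq)
qed

lemma finite_fold_col_insert_set:
  "\<forall>C\<in>set Cs. finite C \<Longrightarrow> \<forall>C\<in>set (fold col_insert_set xs Cs). finite C"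
proof (induction xs arbitrary: Cs)
  case (Cons x xs)
  show ?case
    using Cons.IH[OF finite_col_insert_set[OF Cons.prems]] by simp
qed simp

lemma gap_diagonal_fold_col_insert_set:
  assumes "\<forall>C\<in>set Cs. finite C" "gap_diagonal r s [] Cs" "in_column Cs p s"
    and "sorted_wrt (<) xs" "\<forall>x\<in>set xs. r < x \<and> x < s"
  shows "gap_diagonal r s xs (fold col_insert_set (rev xs) Cs)
    \<and> in_column (fold col_insert_set (rev xs) Cs) (max p (length xs)) s"
  using assms(4,5)
proof (induction xs)
  case (Cons x xs)
  let ?Cs = "fold col_insert_set (rev xs) Cs"
  have fin: "\<forall>C\<in>set ?Cs. finite C"
    using assms(1) by (rule finite_fold_col_insert_set)
  have IH: "gap_diagonal r s xs ?Cs" "in_column ?Cs (max p (length xs)) s"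
    using Cons by auto
  have "gap_diagonal r s (x # xs) (col_insert_set x ?Cs)"
    using fin Cons.prems IH(1) by (intro gap_diagonal_col_insert_set) auto
  moreover have "in_column (col_insert_set x ?Cs) (max (max p (length xs)) (Suc (length xs))) s"
    using fin Cons.prems IH by (intro in_column_col_insert_set_gap) auto
  ultimately show ?case
    by (simp add: max.assoc)
qed (use assms(2,3) in simp)

section \<open>Tableaux with strictly increasing columns\<close>

definition distinct_sorted_columns :: "tableau \<Rightarrow> bool" where
  "distinct_sorted_columns T \<longleftrightarrow> distinct (concat T) \<and> (\<forall>c\<in>set T. sorted_wrt (<) c)"

lemma standard_imp_distinct_sorted_columns: "standard T \<Longrightarrow> distinct_sorted_columns T"
  by (auto simp: standard_def distinct_sorted_columns_def all_set_conv_all_nth)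

lemma sorted_wrt_bump_update:
  fixes c :: "'a::linorder list"
  assumes "sorted_wrt (<) c" "x \<notin> set c" "i < length c" "x < c ! i" "\<forall>j<i. \<not> x < c ! j"
  shows "sorted_wrt (<) (c[i := x])"
  unfolding sorted_wrt_iff_nth_less
proof (intro allI impI)
  fix a b
  assume ab: "a < b" "b < length (c[i := x])"
  have sorted: "c ! a < c ! b" if "a < b" "b < length c" for a b
    using assms(1) that by (simp add: sorted_wrt_iff_nth_less)
  have before: "c ! j < x" if "j < i" for j
  proof -
    have "c ! j \<noteq> x" "\<not> x < c ! j"
      using that assms(2,3,5) nth_mem[of j c] by auto
    then show ?thesis
      by simp
  qed
  consider "a = i" | "b = i" | "a \<noteq> i" "b \<noteq> i"
    by blast
  then show "c[i := x] ! a < c[i := x] ! b"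
  proof cases
    case 1
    then show ?thesis
      using ab assms(4) sorted[of i b] by simp
  next
    case 2
    then show ?thesis
      using ab before[of a] by simp
  next
    case 3
    then show ?thesis
      using ab sorted[of a b] by simp
  qed
qed

lemma bumped_set_eq_nth:
  assumes "sorted_wrt (<) c" "i < length c" "x < c ! i" "\<forall>j<i. \<not> x < c ! j"
  shows "bumped x (set c) = c ! i"
proof (rule bumped_eqI)
  fix z
  assume "z \<in> set c" "x < z"
  then obtain j where "j < length c" "z = c ! j" "\<not> j < i"
    using assms(4) by (metis in_set_conv_nth)
  then show "c ! i \<le> z"
    using assms(1) by (metis le_less linorder_neqE_nat not_less sorted_wrt_nth_less)
qed (use assms in auto)

lemma map_set_col_insert:
  "\<forall>c\<in>set T. sorted_wrt (<) c \<Longrightarrow> map set (col_insert x T) = col_insert_set x (map set T)"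
proof (induction T arbitrary: x)
  case (Cons c cs)
  show ?case
  proof (cases "\<exists>z\<in>set c. x < z")
    case True
    then obtain i where i: "i < length c" "x < c ! i" "\<forall>j<i. \<not> x < c ! j"
      and eq: "col_insert x (c # cs) = c[i := x] # col_insert (c ! i) cs"
      by (rule col_insert_Cons_bumpE)
    have sorted: "sorted_wrt (<) c"
      using Cons.prems by simp
    then have "set (c[i := x]) = insert x (set c - {c ! i})"
      using i(1) by (simp add: set_update_distinct strict_sorted_iff)
    moreover have "bumped x (set c) = c ! i"
      using sorted i by (rule bumped_set_eq_nth)
    ultimately show ?thesis
      using True Cons unfolding eq by simp
  qed simp
qed simp

lemma length_concat_col_insert: "length (concat (col_insert x T)) = Suc (length (concat T))"
proof (induction T arbitrary: x)
  case (Cons c cs)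
  show ?case
  proof (cases "\<exists>z\<in>set c. x < z")
    case True
    then obtain i where "col_insert x (c # cs) = c[i := x] # col_insert (c ! i) cs"
      by (rule col_insert_Cons_bumpE)
    then show ?thesis
      using Cons.IH by simp
  qed simp
qed simp

lemma sorted_columns_col_insert:
  "\<forall>c\<in>set T. sorted_wrt (<) c \<Longrightarrow> distinct (concat T) \<Longrightarrow> x \<notin> entries T
    \<Longrightarrow> \<forall>c\<in>set (col_insert x T). sorted_wrt (<) c"
proof (induction T arbitrary: x)
  case (Cons c cs)
  show ?case
  proof (cases "\<exists>z\<in>set c. x < z")
    case True
    then obtain i where i: "i < length c" "x < c ! i" "\<forall>j<i. \<not> x < c ! j"
      and eq: "col_insert x (c # cs) = c[i := x] # col_insert (c ! i) cs"
      by (rule col_insert_Cons_bumpE)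
    have "sorted_wrt (<) (c[i := x])"
      using Cons.prems i by (intro sorted_wrt_bump_update) auto
    moreover have "c ! i \<notin> entries cs"
      using Cons.prems(2) nth_mem[OF i(1)] by (auto simp: entries_def)
    then have "\<forall>c\<in>set (col_insert (c ! i) cs). sorted_wrt (<) c"
      using Cons by (intro Cons.IH) auto
    ultimately show ?thesis
      unfolding eq by simp
  next
    case False
    then have "\<forall>z\<in>set c. z < x"
      using Cons.prems(3) by (auto simp: not_less order.order_iff_strict)
    then show ?thesis
      using False Cons.prems(1) by (simp add: sorted_wrt_append)
  qed
qed simp

lemma distinct_sorted_columns_col_insert:
  assumes "distinct_sorted_columns T" "x \<notin> entries T"
  shows "distinct_sorted_columns (col_insert x T)"
proof -
  have entries: "entries T' = set (concat T')" for T'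
    by (simp add: entries_def)
  have "card (set (concat (col_insert x T))) = card (insert x (set (concat T)))"
    by (simp only: entries[symmetric] entries_col_insert)
  also have "\<dots> = Suc (length (concat T))"
  proof -
    have "distinct (concat T)" "x \<notin> set (concat T)"
      using assms unfolding distinct_sorted_columns_def entries by simp_all
    then show ?thesis
      by (metis card_insert_disjoint distinct_card List.finite_set)
  qed
  finally have "distinct (concat (col_insert x T))"
    by (intro card_distinct) (simp add: length_concat_col_insert)
  then show ?thesis
    using assms sorted_columns_col_insert by (auto simp: distinct_sorted_columns_def)
qed

lemma map_set_fold_col_insert:
  assumes "distinct_sorted_columns T" "distinct xs" "set xs \<inter> entries T = {}"
  shows "map set (fold col_insert xs T) = fold col_insert_set xs (map set T)"
  using assms
proof (induction xs arbitrary: T)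
  case (Cons x xs)
  have "distinct_sorted_columns (col_insert x T)"
    using Cons.prems by (intro distinct_sorted_columns_col_insert) auto
  moreover have "set xs \<inter> entries (col_insert x T) = {}"
    using Cons.prems by (auto simp: entries_col_insert)
  ultimately have "map set (fold col_insert xs (col_insert x T))
      = fold col_insert_set xs (map set (col_insert x T))"
    using Cons by auto
  then show ?case
    using Cons.prems(1) by (simp add: map_set_col_insert distinct_sorted_columns_def del: col_insert_set.simps)
qed simp

lemma col_eq_if_in_column:
  assumes "in_column (map set T) p y"
  shows "col T y = Suc p"
proof -
  have "(LEAST j. j < length T \<and> y \<in> set (T ! j)) = p"
  proof (rule Least_equality)
    show "p < length T \<and> y \<in> set (T ! p)"
      using assms by (auto simp: in_column_def)
    show "p \<le> j" if "j < length T \<and> y \<in> set (T ! j)" for j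
      using assms that unfolding in_column_def by (metis leI nth_map)
  qed
  then show ?thesis
    by (simp add: col_def)
qed

lemma in_column_col:
  assumes "y \<in> entries T"
  shows "in_column (map set T) (col T y - 1) y"
proof -
  define m where "m = (LEAST j. j < length T \<and> y \<in> set (T ! j))"
  have "\<exists>j. j < length T \<and> y \<in> set (T ! j)"
    using assms unfolding entries_def by (metis UN_E in_set_conv_nth)
  then have m: "m < length T" "y \<in> set (T ! m)"
    unfolding m_def by (metis (mono_tags, lifting) LeastI_ex)+
  have "y \<notin> set (T ! i)" if "i < m" for i
    using not_less_Least[OF that[unfolded m_def]] m(1) that by auto
  with m have "in_column (map set T) m y"
    by (simp add: in_column_def)
  then show ?thesis
    by (simp add: col_def m_def)
qed

theorem lemma2p3:
  fixes T :: tableau and s r :: int and k :: nat and rs :: "int list"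
  assumes "standard T"
    and "\<forall>x\<in>entries T. 0 < x"
    and "s \<in> entries T"
    and "r < s"
    and "\<forall>x\<in>entries T. \<not> (r < x \<and> x < s)"
    and "0 < k" and "int k \<le> s - r"
    and "length rs = k - 1"
    and "sorted_wrt (<) rs"
    and "\<forall>x\<in>set rs. r < x \<and> x < s"
  shows "(\<forall>i < k - 1. col (fold col_insert (rev rs) T) (rs ! i) = i + 1)
       \<and> col (fold col_insert (rev rs) T) s = max (col T s) k
       \<and> (\<forall>s'\<in>entries T. s < s' \<longrightarrow>
            col (fold col_insert (rev rs) T) s' = col T s'
          \<or> col (fold col_insert (rev rs) T) s'
              \<le> max (col T s) k + card {x\<in>entries T. s \<le> x \<and> x < s'})"
proof -
  \<comment> \<open>Positivity of the entries and k \<le> s - r are not needed; the latter already follows from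
    the r_i being distinct integers in (r, s).\<close>
  let ?T' = "fold col_insert (rev rs) T"
  have gap: "\<forall>z\<in>entries T. z \<le> r \<or> s \<le> z"
    using assms(5) by force
  have "map set ?T' = fold col_insert_set (rev rs) (map set T)"
    using assms(9,10) gap by (intro map_set_fold_col_insert standard_imp_distinct_sorted_columns assms(1))
      (force simp: strict_sorted_iff)+
  moreover have "gap_diagonal r s [] (map set T)"
    using gap by (simp add: entries_def)
  ultimately have diag: "gap_diagonal r s rs (map set ?T')"
    and s_col: "in_column (map set ?T') (max (col T s - 1) (length rs)) s"
    using gap_diagonal_fold_col_insert_set[OF _ _ in_column_col[OF assms(3)] assms(9,10)] by auto
  have "col ?T' (rs ! i) = i + 1" if "i < k - 1" for i
    using in_column_gap_diagonal[OF diag] assms(8,9,10) that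
    by (simp add: col_eq_if_in_column strict_sorted_iff)
  moreover have "col T s \<ge> 1"
    by (simp add: col_def)
  then have "col ?T' s = max (col T s) k"
    using col_eq_if_in_column[OF s_col] assms(6,8) by simp
  moreover have "col ?T' s' = col T s'
      \<or> col ?T' s' \<le> max (col T s) k + card {x\<in>entries T. s \<le> x \<and> x < s'}" for s'
    using col_fold_col_insert_changed_le[OF gap, of rs s'] assms(6,8,10) by auto
  ultimately show ?thesis
    by blast
qed

end
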